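(* Let $A(x_1,\dots,x_4)$ be the matrix $$A(x_1,x_2,x_3,x_4)=\begin{bmatrix}x_1 & x_2 & x_3 & x_4\\ -nx_2 & x_1+mx_2 & -nx_4 & x_3+mx_4\\ -qx_3 & -qx_4 & x_1+px_3 & x_2+px_4\\ qnx_4 & -q(x_3+mx_4) & -nx_2-pnx_4 & x_1+mx_2+p(x_3+mx_4)\end{bmatrix},$$ let $P(x_1,\dots,x_8)=\begin{bmatrix}A(x_1,\dots,x_4) & A(x_5,\dots,x_8)\\ -sA(x_5,\dots,x_8) & A(x_1,\dots,x_4)+rA(x_5,\dots,x_8)\end{bmatrix}$, and $f=\det P$, with parameter values $(m,n,p,q,r,s)=(0,-5,0,-3,0,-14)$. Then the octic diophantine equation $f(x_1,\dots,x_8)=1$ has infinitely many solutions in positive integers (one of them being $(4,2,2,1,14,7,8,4)$). *)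

theory Defs
  imports "Jordan_Normal_Form.Determinant"
begin

definition matA :: "int \<Rightarrow> int \<Rightarrow> int \<Rightarrow> int \<Rightarrow> int \<Rightarrow> int \<Rightarrow> int \<Rightarrow> int \<Rightarrow> int mat" where
  "matA m n p q x1 x2 x3 x4 = mat_of_rows_list 4
     [[x1, x2, x3, x4],
      [-n*x2, x1 + m*x2, -n*x4, x3 + m*x4],
      [-q*x3, -q*x4, x1 + p*x3, x2 + p*x4],
      [q*n*x4, -q*(x3 + m*x4), -n*x2 - p*n*x4, x1 + m*x2 + p*(x3 + m*x4)]]"

definition matP :: "int \<Rightarrow> int \<Rightarrow> int \<Rightarrow> int \<Rightarrow> int \<Rightarrow> int \<Rightarrow> int list \<Rightarrow> int mat" where
  "matP m n p q r s x =
     (let A1 = matA m n p q (x!0) (x!1) (x!2) (x!3);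
          A2 = matA m n p q (x!4) (x!5) (x!6) (x!7)
      in four_block_mat A1 A2 ((-s) \<cdot>\<^sub>m A2) (A1 + r \<cdot>\<^sub>m A2))"

definition octic_f :: "int \<Rightarrow> int \<Rightarrow> int \<Rightarrow> int \<Rightarrow> int \<Rightarrow> int \<Rightarrow> int list \<Rightarrow> int" where
  "octic_f m n p q r s x = det (matP m n p q r s x)"

end

theory Submission
  imports Defs
begin

text \<open>For these parameters \<open>P(x)\<close> is the matrix of multiplication by
  \<open>\<alpha> + \<beta>\<surd>14\<close> in the ring \<open>\<int>[\<surd>5, \<surd>3, \<surd>14]\<close>, where \<open>\<alpha>, \<beta> \<in> \<int>[\<surd>5, \<surd>3]\<close> have
  matrices \<open>A(x\<^sub>1,\<dots>,x\<^sub>4)\<close> and \<open>A(x\<^sub>5,\<dots>,x\<^sub>8)\<close>; so \<open>f\<close> is the norm form of that ring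
  and \<open>P(u) P(x) = P(u x)\<close>. The point \<open>u = (4,2,2,1,14,7,8,4)\<close> is a unit of norm 1,
  which is verified by taking norms down the tower \<open>\<int>[\<surd>5, \<surd>3, \<surd>14] \<supset> \<int>[\<surd>5, \<surd>3] \<supset> \<int>[\<surd>5] \<supset> \<int>\<close>,
  i.e. by \<open>det [[A, B], [c B, A]] = det (A\<^sup>2 - c B\<^sup>2)\<close> for commuting \<open>A, B\<close>.
  Since all coordinates of \<open>u\<close> are positive, multiplication by \<open>u\<close> maps positive
  solutions of \<open>f = 1\<close> to positive solutions with larger first coordinate.\<close>

lemma mat_of_rows_list_carrier_mat:
  "length rs = nr \<Longrightarrow> mat_of_rows_list nc rs \<in> carrier_mat nr nc"
  unfolding mat_of_rows_list_def by auto

lemma matA_carrier_mat: "matA m n p q x1 x2 x3 x4 \<in> carrier_mat 4 4"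
  unfolding matA_def by (rule mat_of_rows_list_carrier_mat) simp

lemma matP_carrier_mat: "matP m n p q r s x \<in> carrier_mat 8 8"
proof -
  have "matP m n p q r s x \<in> carrier_mat (4 + 4) (4 + 4)"
    unfolding matP_def Let_def
    by (intro four_block_carrier_mat add_carrier_mat smult_carrier_mat matA_carrier_mat)
  then show ?thesis by simp
qed

lemma det_four_block_mat_norm:
  fixes A B :: "'a :: idom mat"
  assumes A: "A \<in> carrier_mat n n" and B: "B \<in> carrier_mat n n" and commute: "A * B = B * A"
  shows "det (four_block_mat A B (c \<cdot>\<^sub>m B) A) = det (A * A - c \<cdot>\<^sub>m (B * B))"
proof -
  have "(c \<cdot>\<^sub>m B) * A = A * (c \<cdot>\<^sub>m B)"
    using A B commute by (simp add: mult_smult_distrib mult_smult_assoc_mat)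
  then have "det (four_block_mat A B (c \<cdot>\<^sub>m B) A) = det (A * A - B * (c \<cdot>\<^sub>m B))"
    using A B by (intro det_four_block_mat) auto
  also have "B * (c \<cdot>\<^sub>m B) = c \<cdot>\<^sub>m (B * B)"
    using B by (simp add: mult_smult_distrib)
  finally show ?thesis .
qed

lemma infinite_if_increasing_self_map:
  fixes \<mu> :: "'a \<Rightarrow> 'b :: linorder"
  assumes "x \<in> S" and "\<And>x. x \<in> S \<Longrightarrow> g x \<in> S \<and> \<mu> x < \<mu> (g x)"
  shows "infinite S"
proof -
  have "infinite (\<mu> ` S)"
    using assms by (intro infinite_growing) blast+
  then show ?thesis by blast
qed

abbreviation P :: "int list \<Rightarrow> int mat" where
  "P \<equiv> matP 0 (-5) 0 (-3) 0 (-14)"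

abbreviation octic_unit :: "int list" where
  "octic_unit \<equiv> [4, 2, 2, 1, 14, 7, 8, 4]"

text \<open>The coordinates of \<open>u x\<close>, read off the first row of \<open>P(u) P(x)\<close>.\<close>

fun mul_by_unit :: "int list \<Rightarrow> int list" where
  "mul_by_unit [a, b, c, d, e, f, g, h] =
    [4*a + 10*b + 6*c + 15*d + 196*e + 490*f + 336*g + 840*h,
     2*a + 4*b + 3*c + 6*d + 98*e + 196*f + 168*g + 336*h,
     2*a + 5*b + 4*c + 10*d + 112*e + 280*f + 196*g + 490*h,
     a + 2*b + 2*c + 4*d + 56*e + 112*f + 98*g + 196*h,
     14*a + 35*b + 24*c + 60*d + 4*e + 10*f + 6*g + 15*h,
     7*a + 14*b + 12*c + 24*d + 2*e + 4*f + 3*g + 6*h,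
     8*a + 20*b + 14*c + 35*d + 2*e + 5*f + 4*g + 10*h,
     4*a + 8*b + 7*c + 14*d + e + 2*f + 2*g + 4*h]"

lemma length_eq_8_cases:
  assumes "length (x :: 'a list) = 8"
  obtains a b c d e f g h where "x = [a, b, c, d, e, f, g, h]"
  using assms by (auto simp: length_Suc_conv numeral_eq_Suc)

lemma matP_mul_by_unit:
  assumes "length x = 8"
  shows "P (mul_by_unit x) = P octic_unit * P x"
proof -
  obtain a b c d e f g h where x: "x = [a, b, c, d, e, f, g, h]"
    using assms by (rule length_eq_8_cases)
  show ?thesis
    unfolding x matP_def matA_def Let_def
    by (rule eq_matI)
      (auto simp: mat_of_rows_list_def less_Suc_eq numeral_eq_Suc scalar_prod_def algebra_simps)
qed

lemma det_matP_octic_unit: "det (P octic_unit) = 1"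
proof -
  let ?M = "mat_of_rows_list :: nat \<Rightarrow> int list list \<Rightarrow> int mat"
  define A1 A2 where
    "A1 = ?M 4 [[4, 2, 2, 1], [10, 4, 5, 2], [6, 3, 4, 2], [15, 6, 10, 4]]" and
    "A2 = ?M 4 [[14, 7, 8, 4], [35, 14, 20, 8], [24, 12, 14, 7], [60, 24, 35, 14]]"
  define B1 B2 where
    "B1 = ?M 2 [[-12159, -5404], [-27020, -12159]]" and
    "B2 = ?M 2 [[-7020, -3120], [-15600, -7020]]"
  define D1 D2 where "D1 = ?M 1 [[161]]" and "D2 = ?M 1 [[72]]"
  note defs = A1_def A2_def B1_def B2_def D1_def D2_def
  have carrier: "A1 \<in> carrier_mat 4 4" "A2 \<in> carrier_mat 4 4" "B1 \<in> carrier_mat 2 2"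
    "B2 \<in> carrier_mat 2 2" "D1 \<in> carrier_mat 1 1" "D2 \<in> carrier_mat 1 1"
    unfolding defs by (intro mat_of_rows_list_carrier_mat; simp)+
  have commute: "A1 * A2 = A2 * A1" "B1 * B2 = B2 * B1" "D1 * D2 = D2 * D1"
    unfolding defs
    by (rule eq_matI; auto simp: mat_of_rows_list_def less_Suc_eq numeral_eq_Suc scalar_prod_def)+
  have "P octic_unit = four_block_mat A1 A2 (14 \<cdot>\<^sub>m A2) A1"
    unfolding matP_def matA_def Let_def defs
    by (intro cong_four_block_mat eq_matI) (auto simp: mat_of_rows_list_def less_Suc_eq numeral_eq_Suc)
  then have "det (P octic_unit) = det (A1 * A1 - 14 \<cdot>\<^sub>m (A2 * A2))"
    using carrier commute by (simp add: det_four_block_mat_norm)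
  also have "A1 * A1 - 14 \<cdot>\<^sub>m (A2 * A2) = four_block_mat B1 B2 (3 \<cdot>\<^sub>m B2) B1"
    unfolding defs
    by (rule eq_matI) (auto simp: mat_of_rows_list_def less_Suc_eq numeral_eq_Suc scalar_prod_def)
  also have "det \<dots> = det (B1 * B1 - 3 \<cdot>\<^sub>m (B2 * B2))"
    using carrier commute by (simp add: det_four_block_mat_norm)
  also have "B1 * B1 - 3 \<cdot>\<^sub>m (B2 * B2) = four_block_mat D1 D2 (5 \<cdot>\<^sub>m D2) D1"
    unfolding defs
    by (rule eq_matI) (auto simp: mat_of_rows_list_def less_Suc_eq numeral_eq_Suc scalar_prod_def)
  also have "det \<dots> = det (D1 * D1 - 5 \<cdot>\<^sub>m (D2 * D2))"
    using carrier commute by (simp add: det_four_block_mat_norm)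
  also have "D1 * D1 - 5 \<cdot>\<^sub>m (D2 * D2) = 1\<^sub>m 1"
    unfolding defs by (rule eq_matI) (auto simp: mat_of_rows_list_def scalar_prod_def)
  finally show ?thesis by simp
qed

lemma octic_f_mul_by_unit:
  assumes "length x = 8"
  shows "octic_f 0 (-5) 0 (-3) 0 (-14) (mul_by_unit x) = octic_f 0 (-5) 0 (-3) 0 (-14) x"
  unfolding octic_f_def matP_mul_by_unit[OF assms]
  by (simp add: det_mult[OF matP_carrier_mat matP_carrier_mat] det_matP_octic_unit)

lemma mul_by_unit_positive:
  assumes "length x = 8" and "\<forall>i\<in>set x. 0 < i"
  shows "length (mul_by_unit x) = 8" "\<forall>i\<in>set (mul_by_unit x). 0 < i" "x ! 0 < mul_by_unit x ! 0"
proof -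
  obtain a b c d e f g h where x: "x = [a, b, c, d, e, f, g, h]"
    using assms(1) by (rule length_eq_8_cases)
  show "length (mul_by_unit x) = 8" "\<forall>i\<in>set (mul_by_unit x). 0 < i" "x ! 0 < mul_by_unit x ! 0"
    using assms(2) unfolding x by simp_all
qed

theorem mainTheorem11:
  shows "octic_f 0 (-5) 0 (-3) 0 (-14) [4, 2, 2, 1, 14, 7, 8, 4] = 1 \<and>
         infinite {x :: int list. length x = 8 \<and> (\<forall>i\<in>set x. 0 < i) \<and>
                                   octic_f 0 (-5) 0 (-3) 0 (-14) x = 1}"
proof
  show unit: "octic_f 0 (-5) 0 (-3) 0 (-14) octic_unit = 1"
    unfolding octic_f_def by (rule det_matP_octic_unit)
  show "infinite {x :: int list. length x = 8 \<and> (\<forall>i\<in>set x. 0 < i) \<and>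
                                   octic_f 0 (-5) 0 (-3) 0 (-14) x = 1}"
    using unit by (intro infinite_if_increasing_self_map[where g = mul_by_unit and \<mu> = "\<lambda>x. x ! 0"])
      (auto simp: mul_by_unit_positive octic_f_mul_by_unit)
qed

end
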